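(* Let $A=(a_{ij})\in M(m,\mathbb{C})$ be invertible and let $X_A$ be a complex algebra spanned by elements $\{x_{ij}:i,j=1,\ldots,m\}$ (not assumed linearly independent) satisfying $x_{ij}x_{kl}=a_{jk}x_{il}$. Then either $X_A=\{0\}$, or $X_A\neq\{0\}$, in which case $X_A$ is isomorphic to the matrix algebra $M(m,\mathbb{C})$, the elements $x_{ij}$ are linearly independent (in particular all nonzero) and form a basis of $X_A$, and the unit of $X_A$ is $\mathbb{1}=\sum_{i,j=1}^m (A^{-1})_{ij}\,x_{ij}$. *)

theory Defs
  imports "HOL-Analysis.Analysis"
begin

definition mat_cscale :: "complex \<Rightarrow> complex^'n^'n \<Rightarrow> complex^'n^'n" where
  "mat_cscale c M = (\<chi> i j. c * M $ i $ j)"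

text \<open>A (possibly non-unital) associative complex algebra structure on a type 'a with ring
  operations, given by a complex scalar multiplication s: 'a is a complex vector space and
  multiplication is bilinear over the complex numbers.\<close>
definition complex_algebra :: "(complex \<Rightarrow> 'a::ring \<Rightarrow> 'a) \<Rightarrow> bool" where
  "complex_algebra s \<longleftrightarrow> vector_space s \<and>
     (\<forall>c x y. s c (x * y) = s c x * y \<and> s c (x * y) = x * s c y)"

definition matrix_algebra_iso ::
  "(complex \<Rightarrow> 'a::ring \<Rightarrow> 'a) \<Rightarrow> (complex^'n^'n \<Rightarrow> 'a) \<Rightarrow> bool" where
  "matrix_algebra_iso s f \<longleftrightarrow> bij f \<and>
     (\<forall>M N. f (M + N) = f M + f N) \<and>
     (\<forall>c M. f (mat_cscale c M) = s c (f M)) \<and>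
     (\<forall>M N. f (M ** N) = f M * f N)"

end

theory Submission
  imports Defs
begin

text \<open>
  Put \<open>B = A\<^sup>-\<^sup>1\<close> and \<open>e\<^sub>i\<^sub>l = \<Sum>\<^sub>k B\<^sub>l\<^sub>k x\<^sub>i\<^sub>k\<close>. The relations turn into the matrix unit
  relations \<open>e\<^sub>i\<^sub>j e\<^sub>k\<^sub>l = \<delta>\<^sub>j\<^sub>k e\<^sub>i\<^sub>l\<close>, and conversely \<open>x\<^sub>i\<^sub>j = \<Sum>\<^sub>l A\<^sub>j\<^sub>l e\<^sub>i\<^sub>l\<close>. Hence
  \<open>f M = \<Sum> M\<^sub>i\<^sub>j e\<^sub>i\<^sub>j\<close> is an algebra homomorphism from the matrix algebra onto \<open>X\<^sub>A\<close>.
  If all \<open>e\<^sub>i\<^sub>j\<close> vanish, so do all \<open>x\<^sub>i\<^sub>j\<close> and \<open>X\<^sub>A = {0}\<close>. Otherwise some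
  \<open>e\<^sub>p\<^sub>q \<noteq> 0\<close>, and \<open>e\<^sub>p\<^sub>a f(M) e\<^sub>b\<^sub>q = M\<^sub>a\<^sub>b e\<^sub>p\<^sub>q\<close> shows that \<open>f\<close> is injective. Since
  \<open>\<Sum> c\<^sub>i\<^sub>j x\<^sub>i\<^sub>j = f(C A)\<close> and \<open>A\<close> is invertible, the coefficients of the \<open>x\<^sub>i\<^sub>j\<close> are
  unique, and the unit is \<open>f(1) = \<Sum> B\<^sub>i\<^sub>j x\<^sub>i\<^sub>j\<close>.
\<close>

lemma matrix_inv_invertible:
  fixes A :: "'a::semiring_1^'n^'m"
  assumes "invertible A"
  shows "A ** matrix_inv A = mat 1" and "matrix_inv A ** A = mat 1"
proof -
  have "A ** matrix_inv A = mat 1 \<and> matrix_inv A ** A = mat 1"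
    unfolding matrix_inv_def using assms unfolding invertible_def by (rule someI_ex)
  then show "A ** matrix_inv A = mat 1" "matrix_inv A ** A = mat 1" by auto
qed

lemma matrix_mult_right_cancel:
  fixes A :: "'a::semiring_1^'n^'n"
  assumes "invertible A" and "C ** A = D ** A"
  shows "C = D"
  by (metis assms matrix_inv_invertible(1) matrix_mul_assoc matrix_mul_rid)

locale algebra_over = vector_space s for s :: "'k::field \<Rightarrow> 'a::ring \<Rightarrow> 'a" +
  assumes scale_mult_left: "s c (y * z) = s c y * z"
    and scale_mult_right: "s c (y * z) = y * s c z"
begin

lemma scale_mult_scale: "s a y * s b z = s (a * b) (y * z)"
  by (metis scale_mult_left scale_mult_right scale_scale)

end

lemma complex_algebra_iff_algebra_over: "complex_algebra s \<longleftrightarrow> algebra_over s"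
  unfolding complex_algebra_def algebra_over_def algebra_over_axioms_def by blast

locale matrix_relation_algebra = algebra_over s for s :: "'k::field \<Rightarrow> 'a::ring \<Rightarrow> 'a" +
  fixes A :: "'k^'n^'n" and x :: "'n \<Rightarrow> 'n \<Rightarrow> 'a"
  assumes invertible: "invertible A"
    and x_mult: "\<And>i j k l. x i j * x k l = s (A $ j $ k) (x i l)"
begin

definition matrix_unit :: "'n \<Rightarrow> 'n \<Rightarrow> 'a" where
  "matrix_unit i l = (\<Sum>k\<in>UNIV. s (matrix_inv A $ l $ k) (x i k))"

lemma matrix_unit_mult:
  "matrix_unit i j * matrix_unit k l = (if j = k then matrix_unit i l else 0)"
proof -
  let ?B = "matrix_inv A"
  have "matrix_unit i j * matrix_unit k l
      = (\<Sum>q\<in>UNIV. \<Sum>p\<in>UNIV. s (?B$j$p * A$p$k * ?B$l$q) (x i q))"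
    unfolding matrix_unit_def sum_distrib_left sum_distrib_right scale_mult_scale x_mult
    by (simp add: mult_ac)
  also have "\<dots> = (\<Sum>q\<in>UNIV. s ((?B ** A)$j$k * ?B$l$q) (x i q))"
    by (simp add: scale_sum_left[symmetric] sum_distrib_right matrix_matrix_mult_def)
  also have "\<dots> = (if j = k then matrix_unit i l else 0)"
    by (simp add: matrix_inv_invertible(2)[OF invertible] mat_def matrix_unit_def)
  finally show ?thesis .
qed

lemma x_eq_sum_matrix_unit: "x i j = (\<Sum>l\<in>UNIV. s (A$j$l) (matrix_unit i l))"
proof -
  have "(\<Sum>l\<in>UNIV. s (A$j$l) (matrix_unit i l))
      = (\<Sum>k\<in>UNIV. s ((A ** matrix_inv A)$j$k) (x i k))"
    unfolding matrix_unit_def scale_sum_right scale_scale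
    by (subst sum.swap) (simp add: scale_sum_left[symmetric] matrix_matrix_mult_def)
  also have "\<dots> = x i j"
    by (simp add: matrix_inv_invertible(1)[OF invertible] mat_def if_distrib[of "\<lambda>c. s c _"]
        sum.delta cong: if_cong)
  finally show ?thesis by simp
qed

definition of_matrix :: "'k^'n^'n \<Rightarrow> 'a" where
  "of_matrix M = (\<Sum>i\<in>UNIV. \<Sum>j\<in>UNIV. s (M$i$j) (matrix_unit i j))"

lemma of_matrix_add: "of_matrix (M + N) = of_matrix M + of_matrix N"
  by (simp add: of_matrix_def scale_left_distrib sum.distrib)

lemma of_matrix_scale: "of_matrix (\<chi> i j. c * M$i$j) = s c (of_matrix M)"
  by (simp add: of_matrix_def scale_sum_right)

lemma matrix_unit_mult_of_matrix:
  "matrix_unit i j * of_matrix M = (\<Sum>l\<in>UNIV. s (M$j$l) (matrix_unit i l))"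
  unfolding of_matrix_def sum_distrib_left scale_mult_right[symmetric] matrix_unit_mult
  by (subst sum.swap) (simp add: if_distrib[of "s _"] sum.delta' cong: if_cong)

lemma of_matrix_mult: "of_matrix (M ** N) = of_matrix M * of_matrix N"
proof -
  have "of_matrix M * of_matrix N
      = (\<Sum>i\<in>UNIV. \<Sum>j\<in>UNIV. \<Sum>l\<in>UNIV. s (M$i$j * N$j$l) (matrix_unit i l))"
    unfolding of_matrix_def[of M] sum_distrib_right scale_mult_left[symmetric]
    by (simp add: matrix_unit_mult_of_matrix scale_sum_right)
  also have "\<dots> = (\<Sum>i\<in>UNIV. \<Sum>l\<in>UNIV. \<Sum>j\<in>UNIV. s (M$i$j * N$j$l) (matrix_unit i l))"
    by (rule sum.cong[OF refl], rule sum.swap)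
  also have "\<dots> = of_matrix (M ** N)"
    by (simp add: of_matrix_def matrix_matrix_mult_def scale_sum_left)
  finally show ?thesis by simp
qed

lemma matrix_unit_sandwich:
  "matrix_unit p a * of_matrix M * matrix_unit b q = s (M$a$b) (matrix_unit p q)"
  by (simp add: matrix_unit_mult_of_matrix sum_distrib_right scale_mult_left[symmetric]
      matrix_unit_mult if_distrib[of "s _"] sum.delta cong: if_cong)

lemma of_matrix_mat_1:
  "of_matrix (mat 1) = (\<Sum>i\<in>UNIV. \<Sum>j\<in>UNIV. s (matrix_inv A $ i $ j) (x i j))"
  by (simp add: of_matrix_def mat_def if_distrib[of "\<lambda>c. s c _"] sum.delta matrix_unit_def
      cong: if_cong)

lemma of_matrix_mat_1_unit:
  assumes "surj of_matrix"
  shows "of_matrix (mat 1) * y = y" and "y * of_matrix (mat 1) = y"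
proof -
  obtain N where "y = of_matrix N" using assms by (metis surjD)
  then show "of_matrix (mat 1) * y = y" and "y * of_matrix (mat 1) = y"
    by (simp_all flip: of_matrix_mult)
qed

lemma sum_scale_x_eq_of_matrix:
  "(\<Sum>i\<in>UNIV. \<Sum>j\<in>UNIV. s (c i j) (x i j)) = of_matrix ((\<chi> i j. c i j) ** A)"
proof -
  have "(\<Sum>i\<in>UNIV. \<Sum>j\<in>UNIV. s (c i j) (x i j))
      = (\<Sum>i\<in>UNIV. \<Sum>j\<in>UNIV. \<Sum>l\<in>UNIV. s (c i j * A$j$l) (matrix_unit i l))"
    by (simp add: x_eq_sum_matrix_unit scale_sum_right)
  also have "\<dots> = (\<Sum>i\<in>UNIV. \<Sum>l\<in>UNIV. \<Sum>j\<in>UNIV. s (c i j * A$j$l) (matrix_unit i l))"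
    by (rule sum.cong[OF refl], rule sum.swap)
  also have "\<dots> = of_matrix ((\<chi> i j. c i j) ** A)"
    by (simp add: of_matrix_def matrix_matrix_mult_def scale_sum_left)
  finally show ?thesis .
qed

lemma x_eq_sum_scale_indicator:
  "x i j = (\<Sum>k\<in>UNIV. \<Sum>l\<in>UNIV. s (if (k, l) = (i, j) then 1 else 0) (x k l))"
  by (simp add: if_distrib[of "\<lambda>c. s c _"] sum.cartesian_product case_prod_unfold sum.delta
      del: prod.inject cong: if_cong)

lemma x_eq_of_matrix: "x i j = of_matrix ((\<chi> k l. if (k, l) = (i, j) then 1 else 0) ** A)"
  by (subst x_eq_sum_scale_indicator) (rule sum_scale_x_eq_of_matrix)

lemma subspace_range_of_matrix: "subspace (range of_matrix)"
proof (rule subspaceI)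
  show "0 \<in> range of_matrix"
    by (metis rangeI of_matrix_scale scale_zero_left)
  show "y + z \<in> range of_matrix" if "y \<in> range of_matrix" "z \<in> range of_matrix" for y z
    using that by (auto simp flip: of_matrix_add)
  show "s c y \<in> range of_matrix" if "y \<in> range of_matrix" for c y
    using that by (auto simp flip: of_matrix_scale)
qed

lemma surj_of_matrix:
  assumes "span (range (\<lambda>(i, j). x i j)) = UNIV"
  shows "surj of_matrix"
proof -
  have "span (range (\<lambda>(i, j). x i j)) \<subseteq> range of_matrix"
    by (rule span_minimal[OF _ subspace_range_of_matrix]) (auto simp: x_eq_of_matrix)
  then show ?thesis
    using assms by auto
qed

lemma trivial_if_matrix_units_zero:
  assumes "span (range (\<lambda>(i, j). x i j)) = UNIV" and "\<And>i j. matrix_unit i j = 0"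
  shows "(UNIV :: 'a set) = {0}"
proof -
  have "range (\<lambda>(i, j). x i j) \<subseteq> {0}"
    using assms(2) by (auto simp: x_eq_sum_matrix_unit)
  then have "span (range (\<lambda>(i, j). x i j)) \<subseteq> {0}"
    by (metis span_mono span_empty span_insert_0)
  then show ?thesis using assms(1) by auto
qed

lemma of_matrix_diff: "of_matrix (M - N) = of_matrix M - of_matrix N"
  by (simp add: of_matrix_def scale_left_diff_distrib sum_subtractf)

lemma inj_of_matrix:
  assumes "matrix_unit p q \<noteq> 0"
  shows "inj of_matrix"
proof (rule injI)
  fix M N assume "of_matrix M = of_matrix N"
  then have "s ((M - N)$a$b) (matrix_unit p q) = 0" for a b
    unfolding matrix_unit_sandwich[symmetric] by (simp add: of_matrix_diff)
  then show "M = N"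
    using assms by (simp add: vec_eq_iff)
qed

lemma x_coefficients_unique:
  assumes "inj of_matrix"
    and "(\<Sum>i\<in>UNIV. \<Sum>j\<in>UNIV. s (c i j) (x i j)) = (\<Sum>i\<in>UNIV. \<Sum>j\<in>UNIV. s (d i j) (x i j))"
  shows "c = d"
proof -
  have "of_matrix ((\<chi> i j. c i j) ** A) = of_matrix ((\<chi> i j. d i j) ** A)"
    using assms(2) by (simp only: sum_scale_x_eq_of_matrix)
  then have "(\<chi> i j. c i j) ** A = (\<chi> i j. d i j) ** A"
    by (rule injD[OF assms(1)])
  then have "(\<chi> i j. c i j) = (\<chi> i j. d i j)"
    by (rule matrix_mult_right_cancel[OF invertible])
  then show ?thesis
    by (simp add: vec_eq_iff fun_eq_iff)
qed

lemma inj_x: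
  assumes "inj of_matrix"
  shows "inj (\<lambda>(i, j). x i j)"
proof (rule injI, clarify)
  fix i j k l assume "x i j = x k l"
  then have "(\<Sum>a\<in>UNIV. \<Sum>b\<in>UNIV. s (if (a, b) = (i, j) then 1 else 0) (x a b))
      = (\<Sum>a\<in>UNIV. \<Sum>b\<in>UNIV. s (if (a, b) = (k, l) then 1 else 0) (x a b))"
    by (simp only: x_eq_sum_scale_indicator[symmetric])
  then have "(\<lambda>a b. if (a, b) = (i, j) then 1 else 0 :: 'k)
      = (\<lambda>a b. if (a, b) = (k, l) then 1 else 0)"
    by (rule x_coefficients_unique[OF assms])
  from fun_cong[OF fun_cong[OF this, of i], of j] show "i = k \<and> j = l"
    by (auto split: if_splits)
qed

lemma independent_x:
  assumes "inj of_matrix"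
  shows "\<not> dependent (range (\<lambda>(i, j). x i j))"
proof
  let ?X = "\<lambda>(i, j). x i j"
  assume "dependent (range ?X)"
  then obtain u v where "v \<in> range ?X" "u v \<noteq> 0" and "(\<Sum>v\<in>range ?X. s (u v) v) = 0"
    by (auto simp: dependent_finite)
  moreover have "(\<Sum>v\<in>range ?X. s (u v) v) = (\<Sum>i\<in>UNIV. \<Sum>j\<in>UNIV. s (u (x i j)) (x i j))"
    by (simp add: sum.reindex[OF inj_x[OF assms]]) (simp add: sum.cartesian_product split_def)
  ultimately have "(\<lambda>i j. u (x i j)) = (\<lambda>_ _. 0)"
    by (intro x_coefficients_unique[OF assms]) simp
  with \<open>v \<in> range ?X\<close> \<open>u v \<noteq> 0\<close> show False
    by (auto simp: fun_eq_iff)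
qed

lemma x_nonzero:
  assumes "inj of_matrix"
  shows "x i j \<noteq> 0"
  using independent_x[OF assms] dependent_zero[of "range (\<lambda>(i, j). x i j)"]
  by (metis case_prod_conv rangeI)

end

theorem theorem31:
  fixes s :: "complex \<Rightarrow> 'a::ring \<Rightarrow> 'a"
    and A :: "complex^'n^'n"
    and x :: "'n \<Rightarrow> 'n \<Rightarrow> 'a"
  assumes alg: "complex_algebra s"
    and inv: "invertible A"
    and spans: "module.span s (range (\<lambda>(i, j). x i j)) = UNIV"
    and rel: "\<And>i j k l. x i j * x k l = s (A $ j $ k) (x i l)"
  shows "(UNIV :: 'a set) = {0} \<or>
         ((UNIV :: 'a set) \<noteq> {0} \<and>
          (\<exists>f :: complex^'n^'n \<Rightarrow> 'a. matrix_algebra_iso s f) \<and>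
          inj (\<lambda>(i, j). x i j) \<and>
          \<not> module.dependent s (range (\<lambda>(i, j). x i j)) \<and>
          (\<forall>i j. x i j \<noteq> 0) \<and>
          (let u = (\<Sum>i\<in>UNIV. \<Sum>j\<in>UNIV. s (matrix_inv A $ i $ j) (x i j))
           in \<forall>y. u * y = y \<and> y * u = y))"
proof -
  interpret matrix_relation_algebra s A x
    using alg inv rel unfolding complex_algebra_iff_algebra_over
    by (intro matrix_relation_algebra.intro matrix_relation_algebra_axioms.intro)
  show ?thesis
  proof (cases "\<exists>p q. matrix_unit p q \<noteq> 0")
    case False
    then show ?thesis
      using trivial_if_matrix_units_zero[OF spans] by blast
  next
    case True
    then obtain p q where "matrix_unit p q \<noteq> 0" by blast
    then have nontrivial: "(UNIV :: 'a set) \<noteq> {0}" and inj: "inj of_matrix"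
      by (auto intro: inj_of_matrix)
    have surj: "surj of_matrix"
      using spans by (rule surj_of_matrix)
    have "matrix_algebra_iso s of_matrix"
      unfolding matrix_algebra_iso_def bij_def mat_cscale_def
      using inj surj by (simp add: of_matrix_add of_matrix_scale of_matrix_mult)
    then show ?thesis
      using nontrivial inj_x[OF inj] independent_x[OF inj] x_nonzero[OF inj]
        of_matrix_mat_1_unit[OF surj] by (auto simp flip: of_matrix_mat_1)
  qed
qed

end
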